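(* Let $\mathbf A$ be the adjacency matrix of a directed stochastic block model with edge-probability matrix $\mathbf P$, and for distinct $i_1,i_2\in[n]$ let $$M(i_1,i_2)=\frac1{n-2}\left|\sum_{j\in[n]\setminus\{i_1,i_2\}}(A_{i_1j}-P_{i_1j})(A_{i_2j}-P_{i_2j})\right|.$$ Then for any $\epsilon_m>0$, $$\mathbb P\left(\max_{i_1\ne i_2}M(i_1,i_2)<\epsilon_m\right)\ge1-n(n-1)\exp\left(-\frac{\frac12(n-2)\epsilon_m^2}{1+\frac13\epsilon_m}\right),$$ and, for $n\ge4$, the right-hand side is at least $1-n(n-1)\exp\left(-\frac{\frac14n\epsilon_m^2}{1+\epsilon_m}\right)$.
   Context: Model: nodes $[n]$, $K_n$ communities, community-probability vector $\boldsymbol\rho$, block matrix $\mathbf B\in[0,1]^{K_n\times K_n}$, sparsity factor $\gamma_n\in(0,1]$. Labels $Z_1,\dots,Z_n$ i.i.d. Categorical$(\boldsymbol\rho)$, $\pi(i)=Z_i$. Conditionally on the labels, $A_{ij}$ ($i\ne j$) are independent Bernoulli$(\gamma_nB_{\pi(i)\pi(j)})$, $A_{ii}=0$; $\mathbf A$ need not be symmetric. $P_{ij}=\gamma_nB_{\pi(i)\pi(j)}$ for all $i,j$. *)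

theory Defs
  imports "HOL-Probability.Probability"
begin

definition sbm_labels :: "nat \<Rightarrow> nat pmf \<Rightarrow> (nat \<Rightarrow> nat) pmf" where
  "sbm_labels n \<rho> = Pi_pmf {..<n} 0 (\<lambda>_. \<rho>)"

definition sbm_P :: "real \<Rightarrow> (nat \<Rightarrow> nat \<Rightarrow> real) \<Rightarrow> (nat \<Rightarrow> nat) \<Rightarrow> nat \<Rightarrow> nat \<Rightarrow> real" where
  "sbm_P \<gamma> B Z i j = \<gamma> * B (Z i) (Z j)"

definition sbm_adj :: "nat \<Rightarrow> real \<Rightarrow> (nat \<Rightarrow> nat \<Rightarrow> real) \<Rightarrow> (nat \<Rightarrow> nat)
    \<Rightarrow> (nat \<times> nat \<Rightarrow> bool) pmf" where
  "sbm_adj n \<gamma> B Z = Pi_pmf ({..<n} \<times> {..<n}) False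
     (\<lambda>(i,j). if i = j then return_pmf False else bernoulli_pmf (sbm_P \<gamma> B Z i j))"

definition sbm_pmf :: "nat \<Rightarrow> nat pmf \<Rightarrow> (nat \<Rightarrow> nat \<Rightarrow> real) \<Rightarrow> real
    \<Rightarrow> ((nat \<Rightarrow> nat) \<times> (nat \<times> nat \<Rightarrow> bool)) pmf" where
  "sbm_pmf n \<rho> B \<gamma> =
     bind_pmf (sbm_labels n \<rho>) (\<lambda>Z. map_pmf (\<lambda>A. (Z, A)) (sbm_adj n \<gamma> B Z))"

definition sbm_M :: "nat \<Rightarrow> real \<Rightarrow> (nat \<Rightarrow> nat \<Rightarrow> real) \<Rightarrow> (nat \<Rightarrow> nat)
    \<Rightarrow> (nat \<times> nat \<Rightarrow> bool) \<Rightarrow> nat \<Rightarrow> nat \<Rightarrow> real" where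
  "sbm_M n \<gamma> B Z A i1 i2 =
     1 / (real n - 2) *
     \<bar>\<Sum>j\<in>{..<n} - {i1, i2}.
        (of_bool (A (i1, j)) - sbm_P \<gamma> B Z i1 j) * (of_bool (A (i2, j)) - sbm_P \<gamma> B Z i2 j)\<bar>"

end

theory Submission
  imports Defs
begin

text \<open>Conditionally on the labels, the entries of \<open>A\<close> are independent Bernoulli variables.
  For a fixed pair \<open>i1 \<noteq> i2\<close>, the summands
  \<open>(A(i1,j) - P(i1,j)) * (A(i2,j) - P(i2,j))\<close> involve disjoint pairs of entries, so they are
  independent, centred and take values in \<open>[-1, 1]\<close>.  Hoeffding's inequality bounds the
  probability that their sum reaches \<open>(n - 2) \<epsilon>\<close> by \<open>2 exp(-(n - 2) \<epsilon>\<^sup>2 / 2)\<close>, which is even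
  smaller than the Bernstein-type bound of the statement.  A union bound over the
  \<open>n(n - 1)/2\<close> unordered pairs (M is symmetric) gives the bound for every labelling, hence
  also after averaging over the labels.\<close>

lemma indep_vars_Pi_pmf_row_products:
  fixes h :: "'r \<times> 'c \<Rightarrow> 'b \<Rightarrow> real"
  assumes "finite I" and "\<And>j. j \<in> J \<Longrightarrow> (i1, j) \<in> I \<and> (i2, j) \<in> I"
  shows "prob_space.indep_vars (measure_pmf (Pi_pmf I dflt D)) (\<lambda>_. borel)
           (\<lambda>j \<omega>. h (i1, j) (\<omega> (i1, j)) * h (i2, j) (\<omega> (i2, j))) J"
proof -
  define K where "K j = {(i1, j), (i2, j)}" for j :: 'c
  have "prob_space.indep_vars (measure_pmf (Pi_pmf I dflt D))
          (\<lambda>j. PiM (K j) (\<lambda>_. count_space UNIV)) (\<lambda>j \<omega>. restrict (\<lambda>k. \<omega> k) (K j)) J"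
    by (rule prob_space.indep_vars_restrict[OF measure_pmf.prob_space_axioms indep_vars_Pi_pmf[OF assms(1)]])
       (use assms(2) in \<open>auto simp: K_def disjoint_family_on_def\<close>)
  then have "prob_space.indep_vars (measure_pmf (Pi_pmf I dflt D)) (\<lambda>_. borel)
      (\<lambda>j \<omega>. (\<lambda>f. h (i1, j) (f (i1, j)) * h (i2, j) (f (i2, j))) (restrict (\<lambda>k. \<omega> k) (K j))) J"
    by (rule prob_space.indep_vars_compose2[OF measure_pmf.prob_space_axioms])
       (auto simp: K_def intro!: borel_measurable_times
         measurable_compose[OF measurable_component_singleton] borel_measurable_count_space)
  then show ?thesis by (simp add: K_def)
qed

lemma expectation_Pi_pmf_mult_components:
  fixes h :: "'a \<Rightarrow> 'b \<Rightarrow> real"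
  assumes "finite I" "k1 \<in> I" "k2 \<in> I" "k1 \<noteq> k2"
    and "integrable (measure_pmf (D k1)) (h k1)" "integrable (measure_pmf (D k2)) (h k2)"
  shows "measure_pmf.expectation (Pi_pmf I dflt D) (\<lambda>\<omega>. h k1 (\<omega> k1) * h k2 (\<omega> k2)) =
         measure_pmf.expectation (D k1) (h k1) * measure_pmf.expectation (D k2) (h k2)"
proof -
  let ?Q = "Pi_pmf I dflt D"
  have component: "map_pmf (\<lambda>\<omega>. \<omega> k) ?Q = D k" if "k \<in> I" for k
    using Pi_pmf_component[OF assms(1), of k dflt D] that by simp
  have "prob_space.indep_vars (measure_pmf ?Q) (\<lambda>_. borel) (\<lambda>k \<omega>. h k (\<omega> k)) I"
    by (rule prob_space.indep_vars_compose2[OF measure_pmf.prob_space_axioms indep_vars_Pi_pmf[OF assms(1)]]) simp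
  then have indep: "prob_space.indep_vars (measure_pmf ?Q) (\<lambda>_. borel) (\<lambda>k \<omega>. h k (\<omega> k)) {k1, k2}"
    by (rule prob_space.indep_vars_subset[OF measure_pmf.prob_space_axioms]) (use assms(2,3) in auto)
  have integrable: "integrable ?Q (\<lambda>\<omega>. h k (\<omega> k))" if "k \<in> {k1, k2}" for k
  proof -
    have "k \<in> I" "integrable (measure_pmf (D k)) (h k)"
      using that assms(2,3,5,6) by auto
    then have "integrable (map_pmf (\<lambda>\<omega>. \<omega> k) ?Q) (h k)"
      by (simp only: component)
    then show ?thesis by simp
  qed
  have "measure_pmf.expectation ?Q (\<lambda>\<omega>. \<Prod>k\<in>{k1, k2}. h k (\<omega> k))
      = (\<Prod>k\<in>{k1, k2}. measure_pmf.expectation ?Q (\<lambda>\<omega>. h k (\<omega> k)))"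
    by (rule prob_space.indep_vars_lebesgue_integral[OF measure_pmf.prob_space_axioms _ indep integrable]) auto
  moreover have "measure_pmf.expectation ?Q (\<lambda>\<omega>. h k (\<omega> k)) = measure_pmf.expectation (D k) (h k)"
    if "k \<in> I" for k
    using integral_map_pmf[of "\<lambda>\<omega>. \<omega> k" ?Q "h k"] component[OF that] by simp
  ultimately show ?thesis using assms(2-4) by simp
qed

lemma expectation_bernoulli_pmf_centered:
  assumes "0 \<le> p" "p \<le> 1"
  shows "measure_pmf.expectation (bernoulli_pmf p) (\<lambda>b. of_bool b - p) = 0"
  using assms by (simp add: algebra_simps)

lemma prob_abs_sum_centered_row_products_ge:
  fixes p :: "'r \<Rightarrow> 'c \<Rightarrow> real" and t :: real
  assumes "finite I" "finite J" "i1 \<noteq> i2"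
    and in_I: "\<And>j. j \<in> J \<Longrightarrow> (i1, j) \<in> I \<and> (i2, j) \<in> I"
    and D: "\<And>i j. j \<in> J \<Longrightarrow> i \<in> {i1, i2} \<Longrightarrow>
              D (i, j) = bernoulli_pmf (p i j) \<and> 0 \<le> p i j \<and> p i j \<le> 1"
    and "0 \<le> t"
  shows "measure_pmf.prob (Pi_pmf I dflt D)
           {\<omega>. t \<le> \<bar>\<Sum>j\<in>J. (of_bool (\<omega> (i1, j)) - p i1 j) * (of_bool (\<omega> (i2, j)) - p i2 j)\<bar>}
         \<le> 2 * exp (- t\<^sup>2 / (2 * real (card J)))"
proof (cases "J = {}")
  case True
  \<comment> \<open>the bound is \<open>2 * exp 0\<close> here, as division by zero yields zero\<close>
  then show ?thesis by (simp add: order.trans[OF measure_pmf.prob_le_1])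
next
  case False
  define Q where "Q = Pi_pmf I dflt D"
  define h where "h k b = of_bool b - case_prod p k" for k b
  define X where "X j \<omega> = h (i1, j) (\<omega> (i1, j)) * h (i2, j) (\<omega> (i2, j))" for j \<omega>
  have h_bound: "\<bar>h (i, j) b\<bar> \<le> 1" if "j \<in> J" "i \<in> {i1, i2}" for i j b
    using D[OF that] by (auto simp: h_def)
  have X_bound: "X j \<omega> \<in> {-1..1}" if "j \<in> J" for j \<omega>
  proof -
    have "\<bar>X j \<omega>\<bar> \<le> 1"
      unfolding X_def abs_mult by (intro mult_le_one h_bound[OF that]) auto
    then show ?thesis by auto
  qed
  have X_centered: "measure_pmf.expectation Q (X j) = 0" if j: "j \<in> J" for j
  proof -
    have "measure_pmf.expectation Q (X j) =
        measure_pmf.expectation (D (i1, j)) (h (i1, j)) * measure_pmf.expectation (D (i2, j)) (h (i2, j))"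
      unfolding Q_def X_def
      by (rule expectation_Pi_pmf_mult_components)
         (use assms(1,3) in_I[OF j] h_bound[OF j] in \<open>auto intro!: measure_pmf.integrable_const_bound[where B=1]\<close>)
    also have "\<dots> = 0"
      using D[OF j] by (simp add: h_def expectation_bernoulli_pmf_centered)
    finally show ?thesis .
  qed
  have indep: "prob_space.indep_vars (measure_pmf Q) (\<lambda>_. borel) X J"
    unfolding Q_def X_def[abs_def] by (rule indep_vars_Pi_pmf_row_products[OF assms(1) in_I])
  interpret Hoeffding_ineq "measure_pmf Q" J X "\<lambda>_. -1" "\<lambda>_. 1" 0
    by unfold_locales (use assms(2) indep X_bound X_centered in auto)
  have "measure_pmf.prob Q {\<omega>. t \<le> \<bar>\<Sum>j\<in>J. X j \<omega>\<bar>} \<le> 2 * exp (- t\<^sup>2 / (2 * real (card J)))"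
    using Hoeffding_ineq_abs_ge[OF assms(6)] False assms(2) by (simp add: card_gt_0_iff)
  then show ?thesis by (simp add: Q_def X_def h_def)
qed

lemma sbm_M_commute: "sbm_M n \<gamma> B Z A i2 i1 = sbm_M n \<gamma> B Z A i1 i2"
  unfolding sbm_M_def by (simp add: insert_commute mult.commute)

lemma sbm_M_nonpos: "n \<le> 2 \<Longrightarrow> sbm_M n \<gamma> B Z A i1 i2 \<le> 0"
  unfolding sbm_M_def by (intro mult_nonpos_nonneg) auto

lemma prob_sbm_M_ge:
  assumes "2 < n" "i1 < n" "i2 < n" "i1 \<noteq> i2" "0 \<le> \<epsilon>"
    and "\<And>i j. i < n \<Longrightarrow> j < n \<Longrightarrow> 0 \<le> sbm_P \<gamma> B Z i j \<and> sbm_P \<gamma> B Z i j \<le> 1"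
  shows "measure_pmf.prob (sbm_adj n \<gamma> B Z) {A. \<epsilon> \<le> sbm_M n \<gamma> B Z A i1 i2}
         \<le> 2 * exp (- ((real n - 2) * \<epsilon>\<^sup>2 / 2))"
proof -
  define J where "J = {..<n} - {i1, i2}"
  have card_J: "real (card J) = real n - 2"
    using assms(1-4) by (simp add: J_def card_Diff_subset)
  have "{A. \<epsilon> \<le> sbm_M n \<gamma> B Z A i1 i2} = {A. (real n - 2) * \<epsilon> \<le>
      \<bar>\<Sum>j\<in>J. (of_bool (A (i1, j)) - sbm_P \<gamma> B Z i1 j) * (of_bool (A (i2, j)) - sbm_P \<gamma> B Z i2 j)\<bar>}"
    using assms(1) by (simp add: sbm_M_def J_def pos_le_divide_eq mult.commute)
  also have "measure_pmf.prob (sbm_adj n \<gamma> B Z) \<dots> \<le> 2 * exp (- ((real n - 2) * \<epsilon>)\<^sup>2 / (2 * real (card J)))"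
    unfolding sbm_adj_def
    by (rule prob_abs_sum_centered_row_products_ge) (use assms in \<open>auto simp: J_def\<close>)
  also have "\<dots> = 2 * exp (- ((real n - 2) * \<epsilon>\<^sup>2 / 2))"
  proof -
    have exponent: "- (x * \<epsilon>)\<^sup>2 / (2 * x) = - (x * \<epsilon>\<^sup>2 / 2)" if "x > 0" for x :: real
      using that by (simp add: power2_eq_square)
    have "real n - 2 > 0"
      using assms(1) by simp
    show ?thesis
      unfolding card_J exponent[OF \<open>real n - 2 > 0\<close>] ..
  qed
  finally show ?thesis .
qed

lemma prob_ex_sbm_M_ge:
  assumes "0 < \<epsilon>"
    and "\<And>i j. i < n \<Longrightarrow> j < n \<Longrightarrow> 0 \<le> sbm_P \<gamma> B Z i j \<and> sbm_P \<gamma> B Z i j \<le> 1"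
  shows "measure_pmf.prob (sbm_adj n \<gamma> B Z) {A. \<exists>i1<n. \<exists>i2<n. i1 \<noteq> i2 \<and> \<epsilon> \<le> sbm_M n \<gamma> B Z A i1 i2}
         \<le> real n * (real n - 1) * exp (- ((real n - 2) * \<epsilon>\<^sup>2 / 2))"
proof (cases "n \<le> 2")
  case True
  then have "\<not> \<epsilon> \<le> sbm_M n \<gamma> B Z A i1 i2" for A i1 i2
    using sbm_M_nonpos[OF True, of \<gamma> B Z A i1 i2] assms(1) by linarith
  then have "{A. \<exists>i1<n. \<exists>i2<n. i1 \<noteq> i2 \<and> \<epsilon> \<le> sbm_M n \<gamma> B Z A i1 i2} = {}"
    by blast
  moreover have "0 \<le> real n * (real n - 1)"
    by (cases n) auto
  ultimately show ?thesis
    by (simp del: Collect_empty_eq)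
next
  case False
  let ?Q = "sbm_adj n \<gamma> B Z"
  define E where "E i1 i2 = {A. \<epsilon> \<le> sbm_M n \<gamma> B Z A i1 i2}" for i1 i2
  define q where "q = exp (- ((real n - 2) * \<epsilon>\<^sup>2 / 2))"
  have "{A. \<exists>i1<n. \<exists>i2<n. i1 \<noteq> i2 \<and> \<epsilon> \<le> sbm_M n \<gamma> B Z A i1 i2} \<subseteq> (\<Union>i2<n. \<Union>i1<i2. E i1 i2)"
    unfolding E_def using sbm_M_commute by (fastforce simp: neq_iff)
  then have "measure_pmf.prob ?Q {A. \<exists>i1<n. \<exists>i2<n. i1 \<noteq> i2 \<and> \<epsilon> \<le> sbm_M n \<gamma> B Z A i1 i2}
      \<le> measure_pmf.prob ?Q (\<Union>i2<n. \<Union>i1<i2. E i1 i2)"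
    by (rule measure_pmf.finite_measure_mono) simp
  also have "\<dots> \<le> (\<Sum>i2<n. measure_pmf.prob ?Q (\<Union>i1<i2. E i1 i2))"
    by (rule measure_pmf.finite_measure_subadditive_finite) auto
  also have "\<dots> \<le> (\<Sum>i2<n. \<Sum>i1<i2. measure_pmf.prob ?Q (E i1 i2))"
    by (intro sum_mono measure_pmf.finite_measure_subadditive_finite) auto
  also have "\<dots> \<le> (\<Sum>i2<n. \<Sum>i1<i2. 2 * q)"
    unfolding E_def q_def using False assms by (intro sum_mono prob_sbm_M_ge) auto
  also have "\<dots> = (\<Sum>i2<n. real i2) * (2 * q)"
    by (simp add: sum_distrib_right)
  also have "(\<Sum>i2<n. real i2) = real n * (real n - 1) / 2"
    by (induction n) (simp_all add: algebra_simps)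
  finally show ?thesis by (simp add: q_def)
qed

lemma measure_bind_pmf_le:
  assumes "\<And>x. x \<in> set_pmf p \<Longrightarrow> measure_pmf.prob (f x) A \<le> c"
  shows "measure_pmf.prob (bind_pmf p f) A \<le> c"
proof -
  obtain x where "x \<in> set_pmf p"
    using set_pmf_not_empty[of p] by blast
  then have "0 \<le> c"
    using assms measure_nonneg order.trans by blast
  have "ennreal (measure_pmf.prob (bind_pmf p f) A) = (\<integral>\<^sup>+x. emeasure (f x) A \<partial>p)"
    by (simp add: measure_pmf.emeasure_eq_measure[symmetric])
  also have "\<dots> \<le> (\<integral>\<^sup>+x. ennreal c \<partial>p)"
    by (intro nn_integral_mono_AE AE_pmfI) (simp add: measure_pmf.emeasure_eq_measure assms ennreal_leI)
  also have "\<dots> = ennreal c"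
    by (simp add: measure_pmf.emeasure_space_1)
  finally show ?thesis
    using \<open>0 \<le> c\<close> by simp
qed

lemma sbm_labels_in_set_pmf: "Z \<in> set_pmf (sbm_labels n \<rho>) \<Longrightarrow> i < n \<Longrightarrow> Z i \<in> set_pmf \<rho>"
  by (auto simp: sbm_labels_def set_Pi_pmf PiE_dflt_def)

lemma sbm_P_bounds:
  assumes "\<forall>k<K. \<forall>l<K. 0 \<le> B k l \<and> B k l \<le> 1" "0 \<le> \<gamma>" "\<gamma> \<le> 1" "Z i < K" "Z j < K"
  shows "0 \<le> sbm_P \<gamma> B Z i j \<and> sbm_P \<gamma> B Z i j \<le> 1"
  using assms by (auto simp: sbm_P_def intro: mult_le_one)

lemma prob_sbm_pmf_ex_sbm_M_ge:
  assumes "set_pmf \<rho> \<subseteq> {..<K}" "\<forall>k<K. \<forall>l<K. 0 \<le> B k l \<and> B k l \<le> 1" "0 \<le> \<gamma>" "\<gamma> \<le> 1"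
    and "0 < \<epsilon>"
  shows "measure_pmf.prob (sbm_pmf n \<rho> B \<gamma>)
           {(Z, A). \<exists>i1<n. \<exists>i2<n. i1 \<noteq> i2 \<and> \<epsilon> \<le> sbm_M n \<gamma> B Z A i1 i2}
         \<le> real n * (real n - 1) * exp (- ((real n - 2) * \<epsilon>\<^sup>2 / 2))"
  unfolding sbm_pmf_def
proof (rule measure_bind_pmf_le)
  fix Z assume Z: "Z \<in> set_pmf (sbm_labels n \<rho>)"
  have "0 \<le> sbm_P \<gamma> B Z i j \<and> sbm_P \<gamma> B Z i j \<le> 1" if "i < n" "j < n" for i j
    using sbm_labels_in_set_pmf[OF Z] that assms(1-4) by (intro sbm_P_bounds) auto
  then show "measure_pmf.prob (map_pmf (\<lambda>A. (Z, A)) (sbm_adj n \<gamma> B Z))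
      {(Z, A). \<exists>i1<n. \<exists>i2<n. i1 \<noteq> i2 \<and> \<epsilon> \<le> sbm_M n \<gamma> B Z A i1 i2}
    \<le> real n * (real n - 1) * exp (- ((real n - 2) * \<epsilon>\<^sup>2 / 2))"
    using prob_ex_sbm_M_ge[OF assms(5)] by simp
qed

lemma exp_Hoeffding_le_exp_Bernstein:
  fixes m \<epsilon> :: real
  assumes "0 \<le> m" "0 \<le> \<epsilon>"
  shows "exp (- (m * \<epsilon>\<^sup>2 / 2)) \<le> exp (- ((1/2) * m * \<epsilon>\<^sup>2) / (1 + \<epsilon>/3))"
proof -
  have "(1/2) * m * \<epsilon>\<^sup>2 / (1 + \<epsilon>/3) \<le> (1/2) * m * \<epsilon>\<^sup>2"
    using assms by (intro divide_left_mono[of 1, simplified]) auto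
  then show ?thesis
    by simp
qed

lemma exp_Bernstein_le_exp_simplified:
  fixes x \<epsilon> :: real
  assumes "4 \<le> x" "0 \<le> \<epsilon>"
  shows "exp (- ((1/2) * (x - 2) * \<epsilon>\<^sup>2) / (1 + \<epsilon>/3)) \<le> exp (- ((1/4) * x * \<epsilon>\<^sup>2) / (1 + \<epsilon>))"
proof -
  have "(1/4) * x * \<epsilon>\<^sup>2 / (1 + \<epsilon>) \<le> (1/2) * (x - 2) * \<epsilon>\<^sup>2 / (1 + \<epsilon>/3)"
    using assms by (intro frac_le mult_right_mono) auto
  then show ?thesis
    by simp
qed

theorem lemma6:
  fixes n K :: nat and \<rho> :: "nat pmf" and B :: "nat \<Rightarrow> nat \<Rightarrow> real"
    and \<gamma> \<epsilon> :: real
  assumes "set_pmf \<rho> \<subseteq> {..<K}"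
    and "\<forall>k<K. \<forall>l<K. 0 \<le> B k l \<and> B k l \<le> 1"
    and "0 < \<gamma>" and "\<gamma> \<le> 1"
    and "0 < \<epsilon>"
  shows "(measure_pmf.prob (sbm_pmf n \<rho> B \<gamma>)
           {(Z, A). \<forall>i1<n. \<forall>i2<n. i1 \<noteq> i2 \<longrightarrow> sbm_M n \<gamma> B Z A i1 i2 < \<epsilon>}
         \<ge> 1 - real n * (real n - 1) * exp (- ((1/2) * (real n - 2) * \<epsilon>^2) / (1 + \<epsilon>/3))) \<and>
         (4 \<le> n \<longrightarrow>
         1 - real n * (real n - 1) * exp (- ((1/2) * (real n - 2) * \<epsilon>^2) / (1 + \<epsilon>/3))
         \<ge> 1 - real n * (real n - 1) * exp (- ((1/4) * real n * \<epsilon>^2) / (1 + \<epsilon>)))"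
proof -
  let ?M = "sbm_pmf n \<rho> B \<gamma>"
  let ?bad = "{(Z, A). \<exists>i1<n. \<exists>i2<n. i1 \<noteq> i2 \<and> \<epsilon> \<le> sbm_M n \<gamma> B Z A i1 i2}"
  let ?pairs = "real n * (real n - 1)"
  have good_eq: "{(Z, A). \<forall>i1<n. \<forall>i2<n. i1 \<noteq> i2 \<longrightarrow> sbm_M n \<gamma> B Z A i1 i2 < \<epsilon>} = space ?M - ?bad"
    by (auto simp: not_le) (meson not_less)+
  have "measure_pmf.prob ?M {(Z, A). \<forall>i1<n. \<forall>i2<n. i1 \<noteq> i2 \<longrightarrow> sbm_M n \<gamma> B Z A i1 i2 < \<epsilon>}
      = 1 - measure_pmf.prob ?M ?bad"
    unfolding good_eq by (rule measure_pmf.prob_compl) simp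
  moreover have "measure_pmf.prob ?M ?bad \<le> ?pairs * exp (- ((real n - 2) * \<epsilon>\<^sup>2 / 2))"
    using assms by (intro prob_sbm_pmf_ex_sbm_M_ge) auto
  moreover have "?pairs * exp (- ((real n - 2) * \<epsilon>\<^sup>2 / 2))
      \<le> ?pairs * exp (- ((1/2) * (real n - 2) * \<epsilon>^2) / (1 + \<epsilon>/3))"
  proof (cases "n < 2")
    case True
    then have no_pairs: "?pairs = 0"
      by (cases n) auto
    show ?thesis
      unfolding no_pairs by simp
  next
    case False
    then show ?thesis
      using assms(5) by (intro mult_left_mono exp_Hoeffding_le_exp_Bernstein) auto
  qed
  moreover have "?pairs * exp (- ((1/2) * (real n - 2) * \<epsilon>^2) / (1 + \<epsilon>/3))
      \<le> ?pairs * exp (- ((1/4) * real n * \<epsilon>^2) / (1 + \<epsilon>))" if "4 \<le> n"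
    using that assms(5) by (intro mult_left_mono exp_Bernstein_le_exp_simplified) auto
  ultimately show ?thesis
    by linarith
qed

end
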